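(* Let $G=(V,E)$ be the bipartite graph with $V=\{v_1,\dots,v_{10}\}$ and the 14 edges $\{v_1,v_6\},\{v_1,v_7\},\{v_2,v_6\},\{v_2,v_7\},\{v_2,v_8\},\{v_3,v_7\},\{v_3,v_9\},\{v_3,v_{10}\},\{v_4,v_8\},\{v_4,v_9\},\{v_4,v_{10}\},\{v_5,v_8\},\{v_5,v_9\},\{v_5,v_{10}\}$, and let $R=\{\{v_2,v_7\},\{v_4,v_9\},\{v_5,v_{10}\}\}$. Let $y\in\mathbb{R}^E$ be given by $y_{\{v_1,v_6\}}=\frac23$ and $y_e=\frac13$ for all other $e\in E$. Then $y$ is not a convex combination of incidence vectors of perfect matchings $M$ of $G$ with $|M\cap R|$ odd, i.e., $y\notin P_{(G,R)}$.
   Context: $P_{(G,R)}=\operatorname{conv}\{\chi^M\colon M \text{ a perfect matching of } G,\ |M\cap R| \text{ odd}\}$. *)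

theory Defs
  imports Complex_Main
begin

text \<open>Vertices v_1..v_10 are represented by the natural numbers 1..10;
  an edge {v_i,v_j} is the two-element set {i,j}.\<close>

definition V18 :: "nat set" where
  "V18 = {1..10}"

definition E18 :: "nat set set" where
  "E18 = {{1,6},{1,7},{2,6},{2,7},{2,8},{3,7},{3,9},{3,10},
          {4,8},{4,9},{4,10},{5,8},{5,9},{5,10}}"

definition R18 :: "nat set set" where
  "R18 = {{2,7},{4,9},{5,10}}"

definition perfect_matching :: "'v set \<Rightarrow> 'v set set \<Rightarrow> 'v set set \<Rightarrow> bool" where
  "perfect_matching V E M \<longleftrightarrow> M \<subseteq> E \<and> (\<forall>v\<in>V. \<exists>!e. e \<in> M \<and> v \<in> e)"

definition incidence :: "'v set set \<Rightarrow> 'v set \<Rightarrow> real" where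
  "incidence M = (\<lambda>e. if e \<in> M then 1 else 0)"

text \<open>Convex hull of a set of vectors in R^E, given by convex combinations, where
  two vectors are identified when they agree on all coordinates e in E.\<close>
definition conv_on :: "'e set \<Rightarrow> ('e \<Rightarrow> real) set \<Rightarrow> ('e \<Rightarrow> real) set" where
  "conv_on E S = {y. \<exists>F u. finite F \<and> F \<subseteq> S \<and> F \<noteq> {} \<and> (\<forall>x\<in>F. u x \<ge> 0) \<and> sum u F = 1
                        \<and> (\<forall>e\<in>E. y e = (\<Sum>x\<in>F. u x * x e))}"

definition P_GR :: "'v set \<Rightarrow> 'v set set \<Rightarrow> 'v set set \<Rightarrow> ('v set \<Rightarrow> real) set" where
  "P_GR V E R = conv_on E {incidence M | M. perfect_matching V E M \<and> odd (card (M \<inter> R))}"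

definition y18 :: "nat set \<Rightarrow> real" where
  "y18 e = (if e = {1,6} then 2/3 else 1/3)"

end

theory Submission
  imports Defs
begin

(* Every perfect matching M of G with |M \<inter> R| odd has chi_M({v1,v6}) <= chi_M({v2,v7}):
   if M uses {v1,v6} but not {v2,v7}, then v2 is forced onto v8, so v4 and v5
   are matched into {v9,v10}, and M \<inter> R is either empty or
   {{v4,v9},{v5,v10}}. A coordinate inequality valid on a set of vectors stays
   valid on its convex hull, whereas y puts 2/3 on {v1,v6} and only 1/3 on {v2,v7}. *)

lemma conv_on_coordinate_le:
  assumes "y \<in> conv_on E S" and le: "\<And>x. x \<in> S \<Longrightarrow> x a \<le> x b"
    and "a \<in> E" and "b \<in> E"
  shows "y a \<le> y b"
proof -
  obtain F u where "F \<subseteq> S" and nonneg: "\<forall>x\<in>F. u x \<ge> 0"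
    and y: "\<forall>e\<in>E. y e = (\<Sum>x\<in>F. u x * x e)"
    using \<open>y \<in> conv_on E S\<close> unfolding conv_on_def by blast
  have "y a = (\<Sum>x\<in>F. u x * x a)" using y \<open>a \<in> E\<close> by blast
  also have "\<dots> \<le> (\<Sum>x\<in>F. u x * x b)"
    using \<open>F \<subseteq> S\<close> nonneg le by (intro sum_mono mult_left_mono) auto
  also have "\<dots> = y b" using y \<open>b \<in> E\<close> by simp
  finally show ?thesis .
qed

lemma perfect_matching_covers:
  "perfect_matching V E M \<Longrightarrow> v \<in> V \<Longrightarrow> \<exists>e\<in>M. e \<in> E \<and> v \<in> e"
  unfolding perfect_matching_def by blast

lemma perfect_matching_doubleton_unique:
  assumes "perfect_matching V E M" and "a \<in> V" and "{a, b} \<in> M" and "{a, c} \<in> M"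
  shows "b = c"
proof -
  have "{a, b} = {a, c}" using assms unfolding perfect_matching_def by blast
  then show ?thesis by (auto simp: doubleton_eq_iff)
qed

lemma perfect_matching18_R18_even:
  assumes pm: "perfect_matching V18 E18 M" and "{1,6} \<in> M" and "{2,7} \<notin> M"
  shows "even (card (M \<inter> R18))"
proof -
  have edge_at: "\<exists>e\<in>M. e \<in> E18 \<and> v \<in> e" if "v \<in> {2,4,5}" for v :: nat
    using perfect_matching_covers[OF pm] that by (auto simp: V18_def)
  note unique = perfect_matching_doubleton_unique[OF pm, unfolded V18_def]
  have "{2,8} \<in> M"
    using edge_at[of 2] unique[of 6 1 2] \<open>{1,6} \<in> M\<close> \<open>{2,7} \<notin> M\<close>
    by (auto simp: E18_def insert_commute)
  then have "{4,8} \<notin> M" "{5,8} \<notin> M"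
    using unique[of 8 2 4] unique[of 8 2 5] by (auto simp: insert_commute)
  then have "{4,9} \<in> M \<or> {4,10} \<in> M" "{5,9} \<in> M \<or> {5,10} \<in> M"
    using edge_at[of 4] edge_at[of 5] by (auto simp: E18_def)
  then have "{4,9} \<in> M \<longleftrightarrow> {5,10} \<in> M"
    using unique[of 9 4 5] unique[of 10 4 5] by (auto simp: insert_commute)
  then have "M \<inter> R18 = {} \<or> M \<inter> R18 = {{4,9},{5,10}}"
    using \<open>{2,7} \<notin> M\<close> unfolding R18_def by auto
  then show ?thesis by (auto simp: doubleton_eq_iff)
qed

theorem lemma18:
  shows "y18 \<notin> P_GR V18 E18 R18"
proof
  assume "y18 \<in> P_GR V18 E18 R18"
  moreover have "x {1,6} \<le> x {2,7}"
    if "x \<in> {incidence M | M. perfect_matching V18 E18 M \<and> odd (card (M \<inter> R18))}" for x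
    using that perfect_matching18_R18_even unfolding incidence_def by fastforce
  ultimately have "y18 {1,6} \<le> y18 {2,7}"
    unfolding P_GR_def by (rule conv_on_coordinate_le) (auto simp: E18_def)
  then show False by (simp add: y18_def doubleton_eq_iff)
qed

end
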